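(* Let $A,B>0$, $Q=A/B$, $rec$ real, $\epsilon_0 = 1-B\cdot rec$, let $k\ge1$ and let $n_i,d_i,f_i$ be real numbers. Define $N_0 = A\cdot rec - n_0$, $D_0 = B\cdot rec - d_0$, $F_i = 2-D_i-f_i$, and for $i\ge1$: $N_i = N_{i-1}F_{i-1}-n_i$, $D_i = D_{i-1}F_{i-1}-d_i$. Define $\epsilon'_0 = \epsilon_0+d_0$ and $\epsilon'_i = (\epsilon'_{i-1})^2 + (1-\epsilon'_{i-1})f_{i-1} + d_i$ for $i\ge1$. Then for all $i\ge0$, $D_i = 1-\epsilon'_i$, $F_i = 1+\epsilon'_i - f_i$, and $$N_i = Q(1-\epsilon'_i) + \sum_{j=0}^{i}(Qd_j - n_j)\prod_{l=j}^{i-1}F_l .$$ In particular the final numerator satisfies $$N_k = Q\bigl(1-(\epsilon'_{k-1})^2\bigr) - Qf_{k-1}(1-\epsilon'_{k-1}) + \sum_{j=0}^{k-1}(Qd_j-n_j)\prod_{l=j}^{k-1}F_l \;-\; n_k,$$ so that $N_k - Q$ equals the convergent error term $-Q(\epsilon'_{k-1})^2$ plus the accumulative error term $\sum_{j=0}^{k-1}(Qd_j-n_j)\prod_{l=j}^{k-1}F_l - n_k - Qf_{k-1}(1-\epsilon'_{k-1})$. (Empty products equal $1$.)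
   Context: Goldschmidt division of $Q=A/B$ with $k$ iterations in which numerator, denominator and iterative factor are all computed inexactly: $n_i$, $d_i$, $f_i$ are the errors (truncation errors, nonnegative in the paper) on $N_i$, $D_i$, $F_i$ respectively, and $rec$ is an approximate reciprocal of $B$ with relative error $\epsilon_0$. *)

theory Defs
  imports Complex_Main
begin

end

theory Submission
  imports Defs
begin

text \<open>Writing \<open>D i = 1 - \<epsilon>' i\<close>, the denominator recurrence is exactly the recurrence of
  \<open>\<epsilon>'\<close>, because \<open>(1 - \<epsilon>) * (1 + \<epsilon> - f) = 1 - \<epsilon>\<^sup>2 - (1 - \<epsilon>) * f\<close>. The numerator error
  \<open>E i = N i - Q * D i\<close> obeys the linear recurrence \<open>E (i+1) = E i * F i + (Q * d (i+1) - n (i+1))\<close>,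
  whose closed form is the accumulated sum of the propagated step errors; one last multiplication by
  \<open>F (k-1)\<close> splits \<open>N k - Q\<close> into the convergent term \<open>-Q * \<epsilon>'(k-1)\<^sup>2\<close> and the accumulated errors.\<close>

lemma sum_prod_atLeastLessThan_Suc:
  fixes c F :: "nat \<Rightarrow> 'a::comm_semiring_1"
  shows "(\<Sum>j\<in>{0..<Suc m}. c j * (\<Prod>l\<in>{j..<Suc m}. F l))
       = (\<Sum>j\<in>{0..m}. c j * (\<Prod>l\<in>{j..<m}. F l)) * F m"
  unfolding sum_distrib_right mult.assoc atLeastLessThanSuc_atLeastAtMost[of 0]
  by (intro sum.cong) (auto simp: prod.atLeastLessThan_Suc)

lemma linear_recurrence_closed_form:
  fixes x c F :: "nat \<Rightarrow> 'a::comm_semiring_1"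
  assumes "x 0 = c 0"
    and "\<And>i. x (Suc i) = x i * F i + c (Suc i)"
  shows "x i = (\<Sum>j\<in>{0..i}. c j * (\<Prod>l\<in>{j..<i}. F l))"
proof (induction i)
  case 0
  show ?case using assms(1) by simp
next
  case (Suc i)
  have "x (Suc i) = (\<Sum>j\<in>{0..<Suc i}. c j * (\<Prod>l\<in>{j..<Suc i}. F l)) + c (Suc i)"
    using assms(2) Suc by (simp only: sum_prod_atLeastLessThan_Suc)
  then show ?case
    by (simp add: atLeastLessThanSuc_atLeastAtMost)
qed

lemma goldschmidt_denominator:
  fixes D F d f e :: "nat \<Rightarrow> 'a::comm_ring_1"
  assumes "D 0 = 1 - e 0"
    and "\<And>i. F i = 2 - D i - f i"
    and "\<And>i. D (Suc i) = D i * F i - d (Suc i)"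
    and "\<And>i. e (Suc i) = (e i)\<^sup>2 + (1 - e i) * f i + d (Suc i)"
  shows "D i = 1 - e i"
proof (induction i)
  case 0
  show ?case using assms(1) .
next
  case (Suc i)
  have "F i = 1 + e i - f i"
    unfolding assms(2)[of i] Suc by (simp add: algebra_simps)
  then have "D (Suc i) = (1 - e i) * (1 + e i - f i) - d (Suc i)"
    using Suc assms(3)[of i] by simp
  then show ?case
    unfolding assms(4)[of i] by (simp add: power2_eq_square algebra_simps)
qed

lemma goldschmidt_numerator:
  fixes N D F n d :: "nat \<Rightarrow> 'a::comm_ring_1"
  assumes "N 0 - Q * D 0 = Q * d 0 - n 0"
    and "\<And>i. N (Suc i) = N i * F i - n (Suc i)"
    and "\<And>i. D (Suc i) = D i * F i - d (Suc i)"
  shows "N i = Q * D i + (\<Sum>j\<in>{0..i}. (Q * d j - n j) * (\<Prod>l\<in>{j..<i}. F l))"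
proof -
  have "N (Suc i) - Q * D (Suc i) = (N i - Q * D i) * F i + (Q * d (Suc i) - n (Suc i))" for i
    unfolding assms(2,3) by (simp add: algebra_simps)
  then have "N i - Q * D i = (\<Sum>j\<in>{0..i}. (Q * d j - n j) * (\<Prod>l\<in>{j..<i}. F l))"
    by (rule linear_recurrence_closed_form[where x = "\<lambda>i. N i - Q * D i"
          and c = "\<lambda>j. Q * d j - n j", OF assms(1)])
  then show ?thesis by (simp add: algebra_simps)
qed

lemma goldschmidt_final_numerator:
  fixes N F n d :: "nat \<Rightarrow> 'a::comm_ring_1"
  assumes "N m = Q * (1 - e) + (\<Sum>j\<in>{0..m}. (Q * d j - n j) * (\<Prod>l\<in>{j..<m}. F l))"
    and "N (Suc m) = N m * F m - n (Suc m)"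
    and "F m = 1 + e - f"
  shows "N (Suc m) = Q * (1 - e\<^sup>2) - Q * f * (1 - e)
           + (\<Sum>j\<in>{0..<Suc m}. (Q * d j - n j) * (\<Prod>l\<in>{j..<Suc m}. F l)) - n (Suc m)"
proof -
  define S where "S = (\<Sum>j\<in>{0..m}. (Q * d j - n j) * (\<Prod>l\<in>{j..<m}. F l))"
  have sum_Suc: "(\<Sum>j\<in>{0..<Suc m}. (Q * d j - n j) * (\<Prod>l\<in>{j..<Suc m}. F l)) = S * F m"
    unfolding S_def by (rule sum_prod_atLeastLessThan_Suc)
  have N_Suc: "N (Suc m) = (Q * (1 - e) + S) * F m - n (Suc m)"
    using assms(1,2) unfolding S_def by simp
  show ?thesis
    unfolding sum_Suc N_Suc assms(3) by (simp add: power2_eq_square algebra_simps)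
qed

theorem mainTheorem6:
  fixes A B Q rec eps0 :: real and k :: nat
    and n d f N D F eps' :: "nat \<Rightarrow> real"
  assumes "A > 0" and "B > 0" and "Q = A / B"
    and "eps0 = 1 - B * rec" and "k \<ge> 1"
    and "N 0 = A * rec - n 0"
    and "D 0 = B * rec - d 0"
    and "\<And>i. F i = 2 - D i - f i"
    and "\<And>i. N (Suc i) = N i * F i - n (Suc i)"
    and "\<And>i. D (Suc i) = D i * F i - d (Suc i)"
    and "eps' 0 = eps0 + d 0"
    and "\<And>i. eps' (Suc i) = (eps' i)\<^sup>2 + (1 - eps' i) * f i + d (Suc i)"
  shows "(\<forall>i. D i = 1 - eps' i
            \<and> F i = 1 + eps' i - f i
            \<and> N i = Q * (1 - eps' i)
                    + (\<Sum>j\<in>{0..i}. (Q * d j - n j) * (\<Prod>l\<in>{j..<i}. F l)))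
       \<and> N k = Q * (1 - (eps' (k - 1))\<^sup>2) - Q * f (k - 1) * (1 - eps' (k - 1))
               + (\<Sum>j\<in>{0..<k}. (Q * d j - n j) * (\<Prod>l\<in>{j..<k}. F l)) - n k
       \<and> N k - Q = - Q * (eps' (k - 1))\<^sup>2
               + ((\<Sum>j\<in>{0..<k}. (Q * d j - n j) * (\<Prod>l\<in>{j..<k}. F l)) - n k
                  - Q * f (k - 1) * (1 - eps' (k - 1)))"
proof -
  have D0: "D 0 = 1 - eps' 0"
    using assms(4,7,11) by simp
  have D: "D i = 1 - eps' i" for i
    by (rule goldschmidt_denominator[OF D0 assms(8,10,12)])
  have F: "F i = 1 + eps' i - f i" for i
    unfolding assms(8) D by simp
  have "A * rec = Q * (B * rec)"
    using assms(2,3) by simp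
  then have N0: "N 0 - Q * D 0 = Q * d 0 - n 0"
    unfolding assms(6,7) by (simp add: algebra_simps)
  have N: "N i = Q * (1 - eps' i)
                    + (\<Sum>j\<in>{0..i}. (Q * d j - n j) * (\<Prod>l\<in>{j..<i}. F l))" for i
    using goldschmidt_numerator[OF N0 assms(9,10)] unfolding D .
  obtain m where m: "k = Suc m"
    using assms(5) by (cases k) auto
  have N_k: "N k = Q * (1 - (eps' (k - 1))\<^sup>2) - Q * f (k - 1) * (1 - eps' (k - 1))
               + (\<Sum>j\<in>{0..<k}. (Q * d j - n j) * (\<Prod>l\<in>{j..<k}. F l)) - n k"
    unfolding m diff_Suc_1 by (rule goldschmidt_final_numerator[OF N[of m] assms(9)[of m] F[of m]])
  then have N_k_error: "N k - Q = - Q * (eps' (k - 1))\<^sup>2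
               + ((\<Sum>j\<in>{0..<k}. (Q * d j - n j) * (\<Prod>l\<in>{j..<k}. F l)) - n k
                  - Q * f (k - 1) * (1 - eps' (k - 1)))"
    by (simp add: algebra_simps)
  show ?thesis
    by (intro conjI allI D F N N_k N_k_error)
qed

end
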